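(* Let $F$ be a tree on $\{1,\dots,r\}$ in which each edge is given an orientation, and let $B<\infty$. For all families $(W_{ij})_{ij\in E(F)}$ and $(W'_{ij})_{ij\in E(F)}$ with all $W_{ij},W'_{ij}\in\mathcal W_B$, $$t_0\big(F,(W_{ij})\big)\le B^{e(F)}$$ and $$\big|t_0\big(F,(W_{ij})\big)-t_0\big(F,(W'_{ij})\big)\big|\le B^{e(F)-1}\sum_{ij\in E(F)}\|W_{ij}-W'_{ij}\|_\square.$$
   Context: $(\mathcal S,\mu)$ is a probability space; $\mathcal W$ is the set of integrable measurable $W:\mathcal S^2\to[0,\infty)$ (not necessarily symmetric), with marginals $\lambda_W(x)=\int W(x,y)d\mu(y)$, $\lambda'_W(y)=\int W(x,y)d\mu(x)$. $\mathcal W_B=\{W\in\mathcal W:\sup_x\lambda_W(x)\le B,\ \sup_y\lambda'_W(y)\le B\}$. For an oriented tree $F$, with an edge oriented from $i$ to $j$ written $ij$, $t_0(F,(W_{ij}))=\int_{\mathcal S^r}\prod_{ij\in E(F)}W_{ij}(x_i,x_j)\,d\mu(x_1)\cdots d\mu(x_r)$. Cut norm: $\|W\|_\square=\sup_{\|f\|_\infty,\|g\|_\infty\le1}|\int f(x)g(y)W(x,y)\,d\mu(x)d\mu(y)|$. $e(F)$ is the number of edges. *)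

theory Defs
  imports "HOL-Probability.Probability"
begin

text \<open>The underlying undirected
  graph is required to be a (simple) tree: no loops, no pair of antiparallel edges
  (so each undirected edge carries exactly one orientation), connected, acyclic.\<close>

definition und_adj :: "(nat \<times> nat) set \<Rightarrow> nat \<Rightarrow> nat \<Rightarrow> bool" where
  "und_adj E i j \<longleftrightarrow> (i, j) \<in> E \<or> (j, i) \<in> E"

definition has_cycle :: "(nat \<times> nat) set \<Rightarrow> bool" where
  "has_cycle E \<longleftrightarrow> (\<exists>vs. length vs \<ge> 3 \<and> distinct vs
      \<and> (\<forall>k. Suc k < length vs \<longrightarrow> und_adj E (vs ! k) (vs ! Suc k))
      \<and> und_adj E (last vs) (hd vs))"

definition oriented_tree :: "nat \<Rightarrow> (nat \<times> nat) set \<Rightarrow> bool" where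
  "oriented_tree r E \<longleftrightarrow> r \<ge> 1 \<and> E \<subseteq> {1..r} \<times> {1..r}
     \<and> (\<forall>i. (i, i) \<notin> E) \<and> (\<forall>i j. (i, j) \<in> E \<longrightarrow> (j, i) \<notin> E)
     \<and> (\<forall>i\<in>{1..r}. \<forall>j\<in>{1..r}. (und_adj E)\<^sup>*\<^sup>* i j)
     \<and> \<not> has_cycle E"

definition in_WB :: "'a measure \<Rightarrow> real \<Rightarrow> ('a \<Rightarrow> 'a \<Rightarrow> real) \<Rightarrow> bool" where
  "in_WB M B W \<longleftrightarrow>
     integrable (M \<Otimes>\<^sub>M M) (\<lambda>(x, y). W x y)
     \<and> (\<forall>x\<in>space M. \<forall>y\<in>space M. 0 \<le> W x y)
     \<and> (\<forall>x\<in>space M. (\<integral>\<^sup>+ y. ennreal (W x y) \<partial>M) \<le> ennreal B)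
     \<and> (\<forall>y\<in>space M. (\<integral>\<^sup>+ x. ennreal (W x y) \<partial>M) \<le> ennreal B)"

definition t0 :: "'a measure \<Rightarrow> nat \<Rightarrow> (nat \<times> nat) set \<Rightarrow> (nat \<times> nat \<Rightarrow> 'a \<Rightarrow> 'a \<Rightarrow> real) \<Rightarrow> real" where
  "t0 M r E W = (\<integral>x. (\<Prod>e\<in>E. W e (x (fst e)) (x (snd e))) \<partial>(PiM {1..r} (\<lambda>_. M)))"

definition cut_norm :: "'a measure \<Rightarrow> ('a \<Rightarrow> 'a \<Rightarrow> real) \<Rightarrow> real" where
  "cut_norm M W = Sup {\<bar>\<integral>z. f (fst z) * g (snd z) * W (fst z) (snd z) \<partial>(M \<Otimes>\<^sub>M M)\<bar> | f g.
       f \<in> borel_measurable M \<and> g \<in> borel_measurable M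
       \<and> (\<forall>x\<in>space M. \<bar>f x\<bar> \<le> 1) \<and> (\<forall>y\<in>space M. \<bar>g y\<bar> \<le> 1)}"

end

theory Submission
  imports Defs
begin

(* We prove a stronger, vertex-weighted statement by peeling leaves.  Attach to every
   vertex v a measurable weight phi_v with values in [0,1] and consider the integrand
   prod_v phi_v(x_v) * prod_{ij in F} U_ij(x_i, x_j) over a forest F.  If l is a leaf
   with neighbour p, integrating out x_l turns the factor phi_l(x_l) U(x_p, x_l) into a
   function h(x_p) with 0 <= h <= B (this is where both marginal bounds of W_B enter);
   writing h = B * (h / B) absorbs it into the weight of p.  Isolated vertices just
   contribute a factor int phi_l in [0,1].  Iterating gives
     * the bound B^e(F) for the weighted density (first claim, and integrability), and
     * for a fixed edge ab, a bound B^(e(F)-1) * ||P - P'||_cut on the integral of the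
       integrand without ab times P(x_a,x_b) - P'(x_a,x_b): we peel leaves other than a
       and b until only a and b are left, where the integral is a cut-norm test integral.
   The second claim then follows by changing the edge kernels one at a time. *)

definition forest :: "(nat \<times> nat) set \<Rightarrow> bool" where
  "forest E \<longleftrightarrow> (\<forall>i. (i, i) \<notin> E) \<and> (\<forall>i j. (i, j) \<in> E \<longrightarrow> (j, i) \<notin> E) \<and> \<not> has_cycle E"

lemma und_adj_sym: "und_adj E x y = und_adj E y x"
  by (auto simp: und_adj_def)

lemma has_cycle_mono: "E' \<subseteq> E \<Longrightarrow> has_cycle E' \<Longrightarrow> has_cycle E"
  unfolding has_cycle_def und_adj_def by (meson subsetD)

lemma forest_subset: "forest E \<Longrightarrow> E' \<subseteq> E \<Longrightarrow> forest E'"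
  unfolding forest_def using has_cycle_mono by blast

text \<open>A walk whose vertices w 0, ..., w (m - 1) are distinct, which never immediately turns
  back and which returns at step m to an earlier vertex w i, traces the cycle w i, ..., w (m - 1).\<close>
lemma cycle_from_walk:
  assumes irr: "\<forall>i. (i, i) \<notin> E"
    and adj: "\<And>k. k < m \<Longrightarrow> und_adj E (w k) (w (Suc k))"
    and no_back: "\<And>k. Suc k < m \<Longrightarrow> w (Suc (Suc k)) \<noteq> w k"
    and inj: "inj_on w {..<m}"
    and i: "i < m" "w i = w m"
  shows "has_cycle E"
proof -
  define vs where "vs = map w [i..<m]"
  have len: "length vs = m - i" by (simp add: vs_def)
  have last_edge: "und_adj E (w (m - 1)) (w m)" using adj[of "m - 1"] i by simp
  have "m - i \<noteq> 1"
  proof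
    assume "m - i = 1"
    then have "m - 1 = i" by simp
    then show False using last_edge i irr by (auto simp: und_adj_def)
  qed
  moreover have "m - i \<noteq> 2"
  proof
    assume "m - i = 2"
    then have "m = Suc (Suc i)" by simp
    then show False using no_back[of i] i by simp
  qed
  ultimately have "length vs \<ge> 3" using i len by linarith
  moreover have "distinct vs"
    unfolding vs_def distinct_map using inj by (auto simp: inj_on_def)
  moreover have "\<forall>k. Suc k < length vs \<longrightarrow> und_adj E (vs ! k) (vs ! Suc k)"
    using adj len by (auto simp: vs_def)
  moreover have "und_adj E (last vs) (hd vs)"
  proof -
    have "last vs = w (m - 1)" "hd vs = w i"
      using i by (simp_all add: vs_def last_map hd_map)
    then show ?thesis using last_edge i by simp
  qed
  ultimately show ?thesis unfolding has_cycle_def by blast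
qed

fun walk :: "(nat \<times> nat) set \<Rightarrow> nat \<Rightarrow> nat \<Rightarrow> nat \<Rightarrow> nat" where
  "walk E u v 0 = u"
| "walk E u v (Suc 0) = v"
| "walk E u v (Suc (Suc n)) = (SOME z. und_adj E (walk E u v (Suc n)) z \<and> z \<noteq> walk E u v n)"

lemma walk_step:
  assumes ext: "\<And>y. und_adj E (walk E u v (Suc k)) y \<Longrightarrow> \<exists>z. und_adj E (walk E u v (Suc k)) z \<and> z \<noteq> y"
    and adj: "und_adj E (walk E u v k) (walk E u v (Suc k))"
  shows "und_adj E (walk E u v (Suc k)) (walk E u v (Suc (Suc k)))
    \<and> walk E u v (Suc (Suc k)) \<noteq> walk E u v k"
proof -
  from ext adj obtain z where "und_adj E (walk E u v (Suc k)) z \<and> z \<noteq> walk E u v k"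
    by (auto simp: und_adj_sym)
  then show ?thesis unfolding walk.simps by (rule someI)
qed

text \<open>A walk that never turns back and never returns to its start must revisit a vertex,
  since it stays in the finite vertex set.\<close>
lemma walk_revisits:
  fixes w :: "nat \<Rightarrow> nat"
  assumes fin: "finite V" and sub: "E \<subseteq> V \<times> V" and start: "und_adj E (w 0) (w 1)"
    and step: "\<And>k. und_adj E (w k) (w (Suc k)) \<Longrightarrow> w (Suc k) \<noteq> w 0 \<Longrightarrow>
      und_adj E (w (Suc k)) (w (Suc (Suc k))) \<and> w (Suc (Suc k)) \<noteq> w k"
  shows "\<exists>m. \<exists>i<m. w i = w m"
proof (rule ccontr)
  assume "\<nexists>m. \<exists>i<m. w i = w m"
  then have inj: "inj w" unfolding inj_def by (metis linorder_neqE_nat)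
  have adj: "und_adj E (w n) (w (Suc n))" for n
  proof (induction n)
    case 0 then show ?case using start by simp
  next
    case (Suc n)
    have "w (Suc n) \<noteq> w 0" using inj by (simp add: inj_eq)
    then show ?case using step[OF Suc] by simp
  qed
  have "range w \<subseteq> V" using adj sub by (auto simp: und_adj_def)
  then have "finite (range w)" using fin finite_subset by blast
  then show False using inj finite_imageD infinite_UNIV_nat by blast
qed

text \<open>In a finite forest such a walk is impossible: its first repetition closes a cycle.\<close>
lemma nonbacktracking_walk_impossible:
  fixes w :: "nat \<Rightarrow> nat"
  assumes fin: "finite V" and sub: "E \<subseteq> V \<times> V" and forest: "forest E"
    and start: "und_adj E (w 0) (w 1)"
    and step: "\<And>k. und_adj E (w k) (w (Suc k)) \<Longrightarrow> w (Suc k) \<noteq> w 0 \<Longrightarrow>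
      und_adj E (w (Suc k)) (w (Suc (Suc k))) \<and> w (Suc (Suc k)) \<noteq> w k"
  shows False
proof -
  define repeats where "repeats m \<longleftrightarrow> (\<exists>i<m. w i = w m)" for m
  define m where "m = (LEAST m. repeats m)"
  have "repeats m"
    unfolding m_def using walk_revisits[OF fin sub start step] by (metis LeastI repeats_def)
  then obtain i where i: "i < m" "w i = w m" unfolding repeats_def by blast
  have "\<not> repeats k" if "k < m" for k using that unfolding m_def by (rule not_less_Least)
  then have inj: "inj_on w {..<m}"
    unfolding inj_on_def repeats_def by (metis lessThan_iff linorder_neqE_nat)
  have not_start: "w k \<noteq> w 0" if "0 < k" "k < m" for k
    using inj that by (auto dest: inj_onD)
  have adj: "k < m \<longrightarrow> und_adj E (w k) (w (Suc k))" for k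
  proof (induction k)
    case 0 then show ?case using start by simp
  next
    case (Suc k)
    show ?case
    proof
      assume "Suc k < m"
      then show "und_adj E (w (Suc k)) (w (Suc (Suc k)))"
        using step[of k] Suc not_start[of "Suc k"] by simp
    qed
  qed
  have no_back: "w (Suc (Suc k)) \<noteq> w k" if "Suc k < m" for k
    using step[of k] adj[of k] not_start[of "Suc k"] that by simp
  have "has_cycle E"
    using cycle_from_walk[OF _ _ no_back inj i] adj forest by (auto simp: forest_def)
  then show False using forest by (simp add: forest_def)
qed

text \<open>Hence, starting along an edge from u, one must reach a vertex other than u at which
  the greedy walk cannot continue, i.e.\ a vertex of degree one.\<close>
lemma walk_gets_stuck:
  assumes fin: "finite V" and sub: "E \<subseteq> V \<times> V" and forest: "forest E"
    and uv: "und_adj E u v"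
    and ext: "\<And>x y. x \<noteq> u \<Longrightarrow> und_adj E x y \<Longrightarrow> \<exists>z. und_adj E x z \<and> z \<noteq> y"
  shows False
proof (rule nonbacktracking_walk_impossible[OF fin sub forest, of "walk E u v"])
  show "und_adj E (walk E u v 0) (walk E u v 1)" using uv by simp
  fix k assume "und_adj E (walk E u v k) (walk E u v (Suc k))" "walk E u v (Suc k) \<noteq> walk E u v 0"
  moreover have "\<And>y. und_adj E (walk E u v (Suc k)) y \<Longrightarrow> \<exists>z. und_adj E (walk E u v (Suc k)) z \<and> z \<noteq> y"
    using ext calculation(2) by simp
  ultimately show "und_adj E (walk E u v (Suc k)) (walk E u v (Suc (Suc k)))
      \<and> walk E u v (Suc (Suc k)) \<noteq> walk E u v k"
    using walk_step by blast
qed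

definition leafy :: "(nat \<times> nat) set \<Rightarrow> nat \<Rightarrow> bool" where
  "leafy E l \<longleftrightarrow> (\<forall>y z. und_adj E l y \<longrightarrow> und_adj E l z \<longrightarrow> y = z)"

text \<open>Every finite forest with a vertex a and at least one further vertex has a leaf other
  than a: otherwise the greedy walk from a (or from any other vertex, if a is isolated)
  would never get stuck.\<close>
lemma leaf_exists:
  assumes fin: "finite V" and sub: "E \<subseteq> V \<times> V" and forest: "forest E"
    and a: "a \<in> V" and not_single: "V \<noteq> {a}"
  shows "\<exists>l\<in>V. l \<noteq> a \<and> leafy E l"
proof (rule ccontr)
  assume no_leaf: "\<not> ?thesis"
  have branch: "\<exists>z. und_adj E x z \<and> z \<noteq> y" if "x \<noteq> a" "und_adj E x y" for x y
  proof -
    have "x \<in> V" using that(2) sub by (auto simp: und_adj_def)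
    then show ?thesis using no_leaf that unfolding leafy_def by metis
  qed
  show False
  proof (cases "\<exists>v. und_adj E a v")
    case True
    then obtain v where "und_adj E a v" by blast
    then show False using walk_gets_stuck[OF fin sub forest] branch by blast
  next
    case False
    obtain c where c: "c \<in> V" "c \<noteq> a" using a not_single by blast
    then obtain y where cy: "und_adj E c y" using no_leaf unfolding leafy_def by blast
    have "\<exists>z. und_adj E x z \<and> z \<noteq> y" if "x \<noteq> c" "und_adj E x y" for x y
      using branch[OF _ that(2)] that(2) False by blast
    then show False using walk_gets_stuck[OF fin sub forest cy] by blast
  qed
qed

definition pendant :: "(nat \<times> nat) set \<Rightarrow> nat \<Rightarrow> bool" where
  "pendant F l \<longleftrightarrow> (\<forall>e\<in>F. \<forall>e'\<in>F. l \<in> {fst e, snd e} \<longrightarrow> l \<in> {fst e', snd e'} \<longrightarrow> e = e')"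

lemma pendant_subset: "pendant F l \<Longrightarrow> F' \<subseteq> F \<Longrightarrow> pendant F' l"
  unfolding pendant_def by blast

text \<open>In a forest, a leaf lies on at most one edge (the two orientations of a pair are excluded).\<close>
lemma leafy_pendant:
  assumes forest: "forest E" and leaf: "leafy E l"
  shows "pendant E l"
  unfolding pendant_def
proof (intro ballI impI)
  fix e e' assume e: "e \<in> E" "e' \<in> E" "l \<in> {fst e, snd e}" "l \<in> {fst e', snd e'}"
  obtain q where q: "e = (l, q) \<or> e = (q, l)" using e(3) by (cases e) auto
  obtain q' where q': "e' = (l, q') \<or> e' = (q', l)" using e(4) by (cases e') auto
  have "und_adj E l q" "und_adj E l q'" using q q' e(1,2) by (auto simp: und_adj_def)
  then have "q = q'" using leaf unfolding leafy_def by blast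
  then show "e = e'" using q q' e(1,2) forest unfolding forest_def by blast
qed

lemma pendant_cases:
  assumes "pendant F l" "\<forall>i. (i, i) \<notin> F"
  obtains "\<forall>e\<in>F. fst e \<noteq> l \<and> snd e \<noteq> l"
  | p e where "p \<noteq> l" "e \<in> F" "e = (p, l) \<or> e = (l, p)"
      "\<forall>e'\<in>F - {e}. fst e' \<noteq> l \<and> snd e' \<noteq> l"
proof (cases "\<forall>e\<in>F. fst e \<noteq> l \<and> snd e \<noteq> l")
  case False
  then obtain e where e: "e \<in> F" "fst e = l \<or> snd e = l" by blast
  define p where "p = (if fst e = l then snd e else fst e)"
  have "e = (p, l) \<or> e = (l, p)" using e by (cases e) (auto simp: p_def)
  moreover have "p \<noteq> l" using calculation e assms(2) by auto
  moreover have "\<forall>e'\<in>F - {e}. fst e' \<noteq> l \<and> snd e' \<noteq> l"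
    using assms(1) e unfolding pendant_def by auto
  ultimately show ?thesis using that e by blast
qed

text \<open>Take a leaf other than a; if it is b, then b hangs only on a, and the forest without b
  has a leaf other than a, which is still a leaf after b is put back.\<close>
lemma leaf_off_edge:
  assumes fin: "finite V" and sub: "E \<subseteq> V \<times> V" and forest: "forest E"
    and ab: "(a, b) \<in> E" and more: "V \<noteq> {a, b}"
  shows "\<exists>l\<in>V. l \<noteq> a \<and> l \<noteq> b \<and> leafy E l"
proof -
  have aV: "a \<in> V" and bV: "b \<in> V" using ab sub by auto
  obtain l where l: "l \<in> V" "l \<noteq> a" "leafy E l"
    using leaf_exists[OF fin sub forest aV] more bV by blast
  show ?thesis
  proof (cases "l = b")
    case True
    define E' where "E' = E - {(a, b)}"
    have "fst e \<noteq> b \<and> snd e \<noteq> b" if "e \<in> E'" for e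
      using leafy_pendant[OF forest l(3)] ab that True unfolding pendant_def E'_def by force
    then have sub': "E' \<subseteq> (V - {b}) \<times> (V - {b})" using sub by (force simp: E'_def)
    have forest': "forest E'" using forest_subset[OF forest] by (auto simp: E'_def)
    have "V - {b} \<noteq> {a}" using more aV bV by auto
    then obtain l' where l': "l' \<in> V - {b}" "l' \<noteq> a" "leafy E' l'"
      using leaf_exists[OF _ sub' forest'] fin aV l(2) True by blast
    have "und_adj E l' y = und_adj E' l' y" for y
      using l' by (auto simp: E'_def und_adj_def)
    then show ?thesis using l' by (auto simp: leafy_def)
  qed (use l in blast)
qed

lemma forest_has_leaf:
  assumes "finite V" "F \<subseteq> V \<times> V" "forest F" "V \<noteq> {}"
  obtains l where "l \<in> V" "leafy F l"
proof -
  obtain a where a: "a \<in> V" using assms(4) by blast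
  show ?thesis
  proof (cases "V = {a}")
    case True
    then have "leafy F a" using assms(2,3) by (auto simp: leafy_def und_adj_def forest_def)
    then show ?thesis using that a by blast
  qed (use leaf_exists[OF assms(1-3) a] that in blast)
qed

definition weights :: "'a measure \<Rightarrow> nat set \<Rightarrow> (nat \<Rightarrow> 'a \<Rightarrow> real) \<Rightarrow> bool" where
  "weights M V \<phi> \<longleftrightarrow> (\<forall>v\<in>V. \<phi> v \<in> borel_measurable M \<and> (\<forall>z\<in>space M. 0 \<le> \<phi> v z \<and> \<phi> v z \<le> 1))"

definition hom_integrand :: "nat set \<Rightarrow> (nat \<times> nat) set \<Rightarrow> (nat \<Rightarrow> 'a \<Rightarrow> real)
    \<Rightarrow> (nat \<times> nat \<Rightarrow> 'a \<Rightarrow> 'a \<Rightarrow> real) \<Rightarrow> (nat \<Rightarrow> 'a) \<Rightarrow> real" where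
  "hom_integrand V F \<phi> U x = (\<Prod>v\<in>V. \<phi> v (x v)) * (\<Prod>e\<in>F. U e (x (fst e)) (x (snd e)))"

text \<open>The kernel K on the edge e at the leaf l, read as a function of (neighbour, leaf), whichever
  way e is oriented.\<close>
definition toward_leaf :: "nat \<times> nat \<Rightarrow> nat \<Rightarrow> ('a \<Rightarrow> 'a \<Rightarrow> real) \<Rightarrow> 'a \<Rightarrow> 'a \<Rightarrow> real" where
  "toward_leaf e l K z y = (if snd e = l then K z y else K y z)"

lemma weights_subset: "weights M V \<phi> \<Longrightarrow> V' \<subseteq> V \<Longrightarrow> weights M V' \<phi>"
  unfolding weights_def by blast

lemma prod_fun_upd_notin:
  "l \<notin> V \<Longrightarrow> (\<Prod>v\<in>V. \<phi> v ((x(l := y)) v)) = (\<Prod>v\<in>V. \<phi> v (x v))"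
  by (intro prod.cong) auto

lemma hom_integrand_isolated:
  assumes "finite V" "l \<notin> V" "\<forall>e\<in>F. fst e \<noteq> l \<and> snd e \<noteq> l"
  shows "hom_integrand (insert l V) F \<phi> U (x(l := y)) = hom_integrand V F \<phi> U x * \<phi> l y"
proof -
  have edges: "(\<Prod>e\<in>F. U e ((x(l := y)) (fst e)) ((x(l := y)) (snd e)))
      = (\<Prod>e\<in>F. U e (x (fst e)) (x (snd e)))"
    using assms(3) by (intro prod.cong) auto
  have vertices: "(\<Prod>v\<in>insert l V. \<phi> v ((x(l := y)) v)) = \<phi> l y * (\<Prod>v\<in>V. \<phi> v (x v))"
    by (simp only: prod.insert[OF assms(1,2)] prod_fun_upd_notin[OF assms(2)] fun_upd_same)
  show ?thesis unfolding hom_integrand_def edges vertices by (simp add: ac_simps)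
qed

lemma hom_integrand_leaf_edge:
  assumes "finite V" "finite F" "l \<notin> V" "e \<notin> F" "e = (p, l) \<or> e = (l, p)" "p \<noteq> l"
    "\<forall>e'\<in>F. fst e' \<noteq> l \<and> snd e' \<noteq> l"
  shows "hom_integrand (insert l V) (insert e F) \<phi> U (x(l := y))
    = hom_integrand V F \<phi> U x * (\<phi> l y * toward_leaf e l (U e) (x p) y)"
proof -
  have edges: "(\<Prod>e'\<in>insert e F. U e' ((x(l := y)) (fst e')) ((x(l := y)) (snd e')))
      = toward_leaf e l (U e) (x p) y * (\<Prod>e'\<in>F. U e' (x (fst e')) (x (snd e')))"
    using assms by (auto simp: toward_leaf_def intro!: prod.cong)
  have vertices: "(\<Prod>v\<in>insert l V. \<phi> v ((x(l := y)) v)) = \<phi> l y * (\<Prod>v\<in>V. \<phi> v (x v))"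
    by (simp only: prod.insert[OF assms(1,3)] prod_fun_upd_notin[OF assms(3)] fun_upd_same)
  show ?thesis unfolding hom_integrand_def edges vertices by (simp add: ac_simps)
qed

lemma hom_integrand_reweight:
  assumes "finite V" "p \<in> V"
  shows "hom_integrand V F (\<phi>(p := (\<lambda>z. \<phi> p z * c z))) U x = hom_integrand V F \<phi> U x * c (x p)"
proof -
  have "(\<Prod>v\<in>V. (\<phi>(p := (\<lambda>z. \<phi> p z * c z))) v (x v))
      = \<phi> p (x p) * c (x p) * (\<Prod>v\<in>V - {p}. \<phi> v (x v))"
    using assms by (simp add: prod.remove)
  also have "\<dots> = (\<Prod>v\<in>V. \<phi> v (x v)) * c (x p)"
    using assms by (simp add: prod.remove)
  finally show ?thesis unfolding hom_integrand_def by simp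
qed

lemma hom_integrand_update_edge:
  assumes "finite F" "e \<in> F"
  shows "hom_integrand V F \<phi> (U(e := K)) x = hom_integrand V (F - {e}) \<phi> U x * K (x (fst e)) (x (snd e))"
proof -
  have "(\<Prod>e'\<in>F - {e}. (U(e := K)) e' (x (fst e')) (x (snd e')))
      = (\<Prod>e'\<in>F - {e}. U e' (x (fst e')) (x (snd e')))"
    by (intro prod.cong) auto
  then show ?thesis using assms by (simp add: hom_integrand_def prod.remove ac_simps)
qed

lemma in_WB_measurable: "in_WB M B K \<Longrightarrow> (\<lambda>(a, b). K a b) \<in> borel_measurable (M \<Otimes>\<^sub>M M)"
  unfolding in_WB_def by auto

lemma in_WB_nonneg: "in_WB M B K \<Longrightarrow> a \<in> space M \<Longrightarrow> b \<in> space M \<Longrightarrow> 0 \<le> K a b"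
  unfolding in_WB_def by auto

lemma toward_leaf_measurable:
  assumes "in_WB M B K"
  shows "(\<lambda>(z, y). toward_leaf e l K z y) \<in> borel_measurable (M \<Otimes>\<^sub>M M)"
proof -
  have [measurable]: "(\<lambda>(a, b). K a b) \<in> borel_measurable (M \<Otimes>\<^sub>M M)"
    using in_WB_measurable[OF assms] .
  have [measurable]: "(\<lambda>(a, b). K b a) \<in> borel_measurable (M \<Otimes>\<^sub>M M)"
    using measurable_comp[OF measurable_pair_swap' in_WB_measurable[OF assms]]
    by (simp add: comp_def case_prod_beta)
  show ?thesis unfolding toward_leaf_def by (cases "snd e = l") simp_all
qed

text \<open>Viewed from its other end, the kernel on the edge of a leaf has row integrals at most B;
  this uses both marginal bounds of W_B, since the edge may point either way.\<close>
lemma toward_leaf_row_le: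
  assumes "in_WB M B K" "z \<in> space M"
  shows "(\<integral>\<^sup>+ y. ennreal (toward_leaf e l K z y) \<partial>M) \<le> ennreal B"
  using assms unfolding in_WB_def toward_leaf_def by (cases "snd e = l") simp_all

lemma toward_leaf_nonneg:
  "in_WB M B K \<Longrightarrow> z \<in> space M \<Longrightarrow> y \<in> space M \<Longrightarrow> 0 \<le> toward_leaf e l K z y"
  unfolding toward_leaf_def by (auto intro: in_WB_nonneg)

lemma leaf_average:
  assumes M: "prob_space M" and B: "0 \<le> B" and K: "in_WB M B K"
    and \<psi>: "\<psi> \<in> borel_measurable M" "\<forall>y\<in>space M. 0 \<le> \<psi> y \<and> \<psi> y \<le> 1"
  shows "(\<lambda>z. \<integral>y. \<psi> y * toward_leaf e l K z y \<partial>M) \<in> borel_measurable M"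
    and "z \<in> space M \<Longrightarrow> 0 \<le> (\<integral>y. \<psi> y * toward_leaf e l K z y \<partial>M)
      \<and> (\<integral>y. \<psi> y * toward_leaf e l K z y \<partial>M) \<le> B"
proof -
  have [measurable]: "(\<lambda>(z, y). toward_leaf e l K z y) \<in> borel_measurable (M \<Otimes>\<^sub>M M)"
    using toward_leaf_measurable[OF K] .
  have [measurable]: "\<psi> \<in> borel_measurable M" using \<psi> by simp
  have "(\<lambda>(z, y). \<psi> y * toward_leaf e l K z y) \<in> borel_measurable (M \<Otimes>\<^sub>M M)"
    by measurable
  then show "(\<lambda>z. \<integral>y. \<psi> y * toward_leaf e l K z y \<partial>M) \<in> borel_measurable M"
    using sigma_finite_measure.borel_measurable_lebesgue_integral[OF prob_space_imp_sigma_finite[OF M]]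
    by blast
  assume z: "z \<in> space M"
  have "(\<lambda>y. toward_leaf e l K z y) \<in> borel_measurable M"
    using measurable_Pair2[OF toward_leaf_measurable[OF K] z] by simp
  then have meas: "(\<lambda>y. \<psi> y * toward_leaf e l K z y) \<in> borel_measurable M"
    using \<psi>(1) by (intro borel_measurable_times)
  have nonneg: "\<forall>y\<in>space M. 0 \<le> \<psi> y * toward_leaf e l K z y"
    using toward_leaf_nonneg[OF K z] \<psi>(2) by auto
  have "(\<integral>\<^sup>+y. ennreal (\<psi> y * toward_leaf e l K z y) \<partial>M) \<le> (\<integral>\<^sup>+y. ennreal (toward_leaf e l K z y) \<partial>M)"
    using toward_leaf_nonneg[OF K z] \<psi>(2)
    by (intro nn_integral_mono ennreal_leI) (simp add: mult_left_le_one_le)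
  also have "\<dots> \<le> ennreal B" using toward_leaf_row_le[OF K z] .
  finally have bound: "(\<integral>\<^sup>+y. ennreal (\<psi> y * toward_leaf e l K z y) \<partial>M) \<le> ennreal B" .
  have "(\<integral>y. \<psi> y * toward_leaf e l K z y \<partial>M) = enn2real (\<integral>\<^sup>+y. ennreal (\<psi> y * toward_leaf e l K z y) \<partial>M)"
    using nonneg by (intro integral_eq_nn_integral[OF meas]) auto
  then show "0 \<le> (\<integral>y. \<psi> y * toward_leaf e l K z y \<partial>M) \<and> (\<integral>y. \<psi> y * toward_leaf e l K z y \<partial>M) \<le> B"
    using enn2real_mono[OF bound] B by simp
qed

lemma hom_integrand_nonneg:
  assumes "x \<in> space (PiM V (\<lambda>_. M))" "F \<subseteq> V \<times> V" "weights M V \<phi>" "\<forall>e\<in>F. in_WB M B (U e)"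
  shows "0 \<le> hom_integrand V F \<phi> U x"
proof -
  have x: "v \<in> V \<Longrightarrow> x v \<in> space M" for v using assms(1) by (auto simp: space_PiM)
  show ?thesis unfolding hom_integrand_def
  proof (intro mult_nonneg_nonneg prod_nonneg)
    fix v assume "v \<in> V" then show "0 \<le> \<phi> v (x v)" using assms(3) x unfolding weights_def by blast
  next
    fix e assume "e \<in> F" then show "0 \<le> U e (x (fst e)) (x (snd e))"
      using assms(2,4) x by (cases e) (auto intro: in_WB_nonneg)
  qed
qed

lemma hom_integrand_measurable:
  assumes "F \<subseteq> V \<times> V" "weights M V \<phi>" "\<forall>e\<in>F. in_WB M B (U e)"
  shows "hom_integrand V F \<phi> U \<in> borel_measurable (PiM V (\<lambda>_. M))"
proof -
  have vertex: "(\<lambda>x. \<phi> v (x v)) \<in> borel_measurable (PiM V (\<lambda>_. M))" if "v \<in> V" for v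
  proof -
    have "\<phi> v \<in> borel_measurable M" using assms(2) that unfolding weights_def by blast
    then show ?thesis by (rule measurable_compose[OF measurable_component_singleton[OF that]])
  qed
  have edge: "(\<lambda>x. U e (x (fst e)) (x (snd e))) \<in> borel_measurable (PiM V (\<lambda>_. M))" if "e \<in> F" for e
  proof -
    have "fst e \<in> V" "snd e \<in> V" using assms(1) that by auto
    then have "(\<lambda>x. (x (fst e), x (snd e))) \<in> measurable (PiM V (\<lambda>_. M)) (M \<Otimes>\<^sub>M M)" by measurable
    from measurable_comp[OF this in_WB_measurable[of M B "U e"]] assms(3) that show ?thesis
      by (simp add: comp_def)
  qed
  show ?thesis unfolding hom_integrand_def[abs_def]
    by (intro borel_measurable_times borel_measurable_prod vertex edge)
qed

definition away :: "(nat \<times> nat) set \<Rightarrow> nat \<Rightarrow> (nat \<times> nat) set" where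
  "away F l = {e \<in> F. fst e \<noteq> l \<and> snd e \<noteq> l}"

lemma away_subset: "away F l \<subseteq> F"
  by (auto simp: away_def)

lemma away_edges: "F \<subseteq> insert l V \<times> insert l V \<Longrightarrow> away F l \<subseteq> V \<times> V"
  by (auto simp: away_def)

lemma nn_integral_isolated_le:
  assumes M: "prob_space M" and fin: "finite V" and l: "l \<notin> V"
    and avoid: "\<forall>e\<in>F. fst e \<noteq> l \<and> snd e \<noteq> l"
    and nonneg: "0 \<le> hom_integrand V F \<phi> U x" and \<phi>l: "\<forall>y\<in>space M. 0 \<le> \<phi> l y \<and> \<phi> l y \<le> 1"
  shows "(\<integral>\<^sup>+y. ennreal (hom_integrand (insert l V) F \<phi> U (x(l := y))) \<partial>M)
    \<le> ennreal (hom_integrand V F \<phi> U x)"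
proof -
  have "(\<integral>\<^sup>+y. ennreal (hom_integrand (insert l V) F \<phi> U (x(l := y))) \<partial>M)
      = (\<integral>\<^sup>+y. ennreal (hom_integrand V F \<phi> U x * \<phi> l y) \<partial>M)"
    by (simp only: hom_integrand_isolated[OF fin l avoid])
  also have "\<dots> \<le> (\<integral>\<^sup>+y. ennreal (hom_integrand V F \<phi> U x) \<partial>M)"
    using nonneg \<phi>l by (intro nn_integral_mono ennreal_leI) (simp add: mult_right_le_one_le)
  also have "\<dots> = ennreal (hom_integrand V F \<phi> U x)"
    using prob_space.emeasure_space_1[OF M] by simp
  finally show ?thesis .
qed

lemma nn_integral_leaf_edge_le:
  assumes fin: "finite V" and finF: "finite F" and l: "l \<notin> V"
    and e: "e \<notin> F" "e = (p, l) \<or> e = (l, p)" "p \<noteq> l" and avoid: "\<forall>e'\<in>F. fst e' \<noteq> l \<and> snd e' \<noteq> l"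
    and Ue: "in_WB M B (U e)" and xp: "x p \<in> space M"
    and nonneg: "0 \<le> hom_integrand V F \<phi> U x" and \<phi>l: "\<forall>y\<in>space M. 0 \<le> \<phi> l y \<and> \<phi> l y \<le> 1"
  shows "(\<integral>\<^sup>+y. ennreal (hom_integrand (insert l V) (insert e F) \<phi> U (x(l := y))) \<partial>M)
    \<le> ennreal (hom_integrand V F \<phi> U x) * ennreal B"
proof -
  have "(\<integral>\<^sup>+y. ennreal (hom_integrand (insert l V) (insert e F) \<phi> U (x(l := y))) \<partial>M)
      = (\<integral>\<^sup>+y. ennreal (hom_integrand V F \<phi> U x * (\<phi> l y * toward_leaf e l (U e) (x p) y)) \<partial>M)"
    by (simp only: hom_integrand_leaf_edge[OF fin finF l e avoid])
  also have "\<dots> \<le> (\<integral>\<^sup>+y. ennreal (hom_integrand V F \<phi> U x) * ennreal (toward_leaf e l (U e) (x p) y) \<partial>M)"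
    using nonneg \<phi>l toward_leaf_nonneg[OF Ue xp]
    by (intro nn_integral_mono)
       (simp add: ennreal_mult'[symmetric] ennreal_leI mult_left_mono mult_left_le_one_le)
  also have "\<dots> = ennreal (hom_integrand V F \<phi> U x) * (\<integral>\<^sup>+y. ennreal (toward_leaf e l (U e) (x p) y) \<partial>M)"
    using measurable_Pair2[OF toward_leaf_measurable[OF Ue] xp] by (intro nn_integral_cmult) simp
  also have "\<dots> \<le> ennreal (hom_integrand V F \<phi> U x) * ennreal B"
    using toward_leaf_row_le[OF Ue xp] by (intro mult_left_mono) auto
  finally show ?thesis .
qed

lemma nn_peel_leaf:
  assumes M: "prob_space M" and B: "0 \<le> B" and fin: "finite V" and l: "l \<notin> V"
    and sub: "F \<subseteq> insert l V \<times> insert l V" and finF: "finite F" and irr: "\<forall>i. (i, i) \<notin> F"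
    and pend: "pendant F l" and \<phi>: "weights M (insert l V) \<phi>" and U: "\<forall>e\<in>F. in_WB M B (U e)"
    and IH: "(\<integral>\<^sup>+x. ennreal (hom_integrand V (away F l) \<phi> U x) \<partial>PiM V (\<lambda>_. M))
      \<le> ennreal (B ^ card (away F l))"
  shows "(\<integral>\<^sup>+x. ennreal (hom_integrand (insert l V) F \<phi> U x) \<partial>PiM (insert l V) (\<lambda>_. M))
    \<le> ennreal (B ^ card F)"
proof -
  interpret P: product_sigma_finite "\<lambda>_::nat. M"
    using M by (simp add: product_sigma_finite_def prob_space_imp_sigma_finite)
  define F' where "F' = away F l"
  have sub': "F' \<subseteq> V \<times> V" unfolding F'_def using away_edges[OF sub] .
  have U': "\<forall>e\<in>F'. in_WB M B (U e)" using U away_subset unfolding F'_def by blast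
  have \<phi>': "weights M V \<phi>" using weights_subset[OF \<phi>] by blast
  have \<phi>l: "\<forall>y\<in>space M. 0 \<le> \<phi> l y \<and> \<phi> l y \<le> 1" using \<phi> by (simp add: weights_def)
  have nonneg: "x \<in> space (PiM V (\<lambda>_. M)) \<Longrightarrow> 0 \<le> hom_integrand V F' \<phi> U x" for x
    using hom_integrand_nonneg[OF _ sub' \<phi>' U'] by blast
  have meas: "(\<lambda>x. ennreal (hom_integrand V F' \<phi> U x)) \<in> borel_measurable (PiM V (\<lambda>_. M))"
    using hom_integrand_measurable[OF sub' \<phi>' U'] by measurable
  have split: "(\<integral>\<^sup>+x. ennreal (hom_integrand (insert l V) F \<phi> U x) \<partial>PiM (insert l V) (\<lambda>_. M))
      = (\<integral>\<^sup>+x. (\<integral>\<^sup>+y. ennreal (hom_integrand (insert l V) F \<phi> U (x(l := y))) \<partial>M) \<partial>PiM V (\<lambda>_. M))"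
    using P.product_nn_integral_insert[OF fin l] hom_integrand_measurable[OF sub \<phi> U] by simp
  from pend irr show ?thesis
  proof (cases rule: pendant_cases)
    case 1
    then have F'_eq: "F' = F" by (auto simp: F'_def away_def)
    have "(\<integral>\<^sup>+x. ennreal (hom_integrand (insert l V) F \<phi> U x) \<partial>PiM (insert l V) (\<lambda>_. M))
        \<le> (\<integral>\<^sup>+x. ennreal (hom_integrand V F' \<phi> U x) \<partial>PiM V (\<lambda>_. M))"
      unfolding split F'_eq using nn_integral_isolated_le[where \<phi>=\<phi>, OF M fin l 1 _ \<phi>l] nonneg F'_eq
      by (intro nn_integral_mono) auto
    also have "\<dots> \<le> ennreal (B ^ card F)" using IH F'_eq unfolding F'_def by simp
    finally show ?thesis .
  next
    case (2 p e)
    then have F: "F = insert e F'" "e \<notin> F'" "finite F'" and p: "p \<in> V"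
      and avoid: "\<forall>e'\<in>F'. fst e' \<noteq> l \<and> snd e' \<noteq> l"
      using finF sub by (auto simp: F'_def away_def)
    have Ue: "in_WB M B (U e)" using U 2 by blast
    have "(\<integral>\<^sup>+x. ennreal (hom_integrand (insert l V) F \<phi> U x) \<partial>PiM (insert l V) (\<lambda>_. M))
        \<le> (\<integral>\<^sup>+x. ennreal (hom_integrand V F' \<phi> U x) * ennreal B \<partial>PiM V (\<lambda>_. M))"
      unfolding split unfolding F(1)
      using nn_integral_leaf_edge_le[where \<phi>=\<phi> and U=U, OF fin F(3) l F(2) 2(3,1) avoid Ue _ _ \<phi>l]
        nonneg p
      by (intro nn_integral_mono) (auto simp: space_PiM)
    also have "\<dots> = (\<integral>\<^sup>+x. ennreal (hom_integrand V F' \<phi> U x) \<partial>PiM V (\<lambda>_. M)) * ennreal B"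
      using meas by (rule nn_integral_multc)
    also have "\<dots> \<le> ennreal (B ^ card F') * ennreal B"
      using IH unfolding F'_def by (intro mult_right_mono) auto
    also have "\<dots> = ennreal (B ^ card F)"
      using B F by (simp add: ennreal_mult'[symmetric] mult.commute)
    finally show ?thesis .
  qed
qed

lemma hom_integrand_nn_integral_le:
  assumes M: "prob_space M" and B: "0 \<le> B" and fin: "finite V" and sub: "F \<subseteq> V \<times> V"
    and forest: "forest F" and \<phi>: "weights M V \<phi>" and U: "\<forall>e\<in>F. in_WB M B (U e)"
  shows "(\<integral>\<^sup>+x. ennreal (hom_integrand V F \<phi> U x) \<partial>PiM V (\<lambda>_. M)) \<le> ennreal (B ^ card F)"
  using fin sub forest \<phi> U
proof (induction V arbitrary: F rule: finite_psubset_induct)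
  case (psubset V F)
  show ?case
  proof (cases "V = {}")
    case True
    then have "F = {}" using psubset.prems(1) by auto
    moreover have "prob_space (PiM V (\<lambda>_. M))" using M by (intro prob_space_PiM) auto
    ultimately show ?thesis
      using True by (simp add: hom_integrand_def prob_space.emeasure_space_1)
  next
    case False
    obtain l where l: "l \<in> V" "leafy F l"
      using forest_has_leaf[OF psubset.hyps(1) psubset.prems(1,2) False] by blast
    define V' where "V' = V - {l}"
    have V: "V = insert l V'" "l \<notin> V'" "finite V'" "V' \<subset> V"
      using l psubset.hyps by (auto simp: V'_def)
    have finF: "finite F" using psubset.hyps psubset.prems(1) finite_subset by blast
    have "(\<integral>\<^sup>+x. ennreal (hom_integrand V' (away F l) \<phi> U x) \<partial>PiM V' (\<lambda>_. M))
        \<le> ennreal (B ^ card (away F l))"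
    proof (rule psubset.IH[OF V(4)])
      show "away F l \<subseteq> V' \<times> V'" using away_edges psubset.prems(1) V(1) by blast
      show "forest (away F l)" using forest_subset[OF psubset.prems(2) away_subset] .
      show "weights M V' \<phi>" using weights_subset[OF psubset.prems(3)] V(4) by blast
      show "\<forall>e\<in>away F l. in_WB M B (U e)" using psubset.prems(4) by (auto simp: away_def)
    qed
    then show ?thesis
      using nn_peel_leaf[OF M B V(3,2) _ finF _ leafy_pendant[OF _ l(2)]] psubset.prems V(1)
      by (simp add: forest_def)
  qed
qed

lemma hom_integrand_integrable:
  assumes M: "prob_space M" and B: "0 \<le> B" and fin: "finite V" and sub: "F \<subseteq> V \<times> V"
    and forest: "forest F" and \<phi>: "weights M V \<phi>" and U: "\<forall>e\<in>F. in_WB M B (U e)"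
  shows "integrable (PiM V (\<lambda>_. M)) (hom_integrand V F \<phi> U)"
    and "(\<integral>x. hom_integrand V F \<phi> U x \<partial>PiM V (\<lambda>_. M)) \<le> B ^ card F"
proof -
  note meas = hom_integrand_measurable[OF sub \<phi> U]
  have nonneg: "AE x in PiM V (\<lambda>_. M). 0 \<le> hom_integrand V F \<phi> U x"
    using hom_integrand_nonneg[OF _ sub \<phi> U] by (intro AE_I2) blast
  note bound = hom_integrand_nn_integral_le[OF assms]
  show "integrable (PiM V (\<lambda>_. M)) (hom_integrand V F \<phi> U)"
    using bound by (intro integrableI_nonneg[OF meas nonneg]) (simp add: le_less_trans)
  have "(\<integral>x. hom_integrand V F \<phi> U x \<partial>PiM V (\<lambda>_. M))
      = enn2real (\<integral>\<^sup>+x. ennreal (hom_integrand V F \<phi> U x) \<partial>PiM V (\<lambda>_. M))"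
    by (rule integral_eq_nn_integral[OF meas nonneg])
  then show "(\<integral>x. hom_integrand V F \<phi> U x \<partial>PiM V (\<lambda>_. M)) \<le> B ^ card F"
    using enn2real_mono[OF bound] B by simp
qed

lemma integral_peel_isolated:
  assumes M: "prob_space M" and fin: "finite V" and l: "l \<notin> V"
    and avoid: "\<forall>e\<in>F. fst e \<noteq> l \<and> snd e \<noteq> l" and \<Gamma>: "\<And>x y. \<Gamma> (x(l := y)) = \<Gamma> x"
    and int: "integrable (PiM (insert l V) (\<lambda>_. M)) (\<lambda>x. hom_integrand (insert l V) F \<phi> U x * \<Gamma> x)"
  shows "(\<integral>x. hom_integrand (insert l V) F \<phi> U x * \<Gamma> x \<partial>PiM (insert l V) (\<lambda>_. M))
    = (\<integral>y. \<phi> l y \<partial>M) * (\<integral>x. hom_integrand V F \<phi> U x * \<Gamma> x \<partial>PiM V (\<lambda>_. M))"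
proof -
  interpret P: product_sigma_finite "\<lambda>_::nat. M"
    using M by (simp add: product_sigma_finite_def prob_space_imp_sigma_finite)
  have "(\<integral>x. hom_integrand (insert l V) F \<phi> U x * \<Gamma> x \<partial>PiM (insert l V) (\<lambda>_. M))
      = (\<integral>x. (\<integral>y. hom_integrand (insert l V) F \<phi> U (x(l := y)) * \<Gamma> (x(l := y)) \<partial>M) \<partial>PiM V (\<lambda>_. M))"
    using P.product_integral_insert[OF fin l int] by simp
  also have "\<dots> = (\<integral>x. (\<integral>y. \<phi> l y \<partial>M) * (hom_integrand V F \<phi> U x * \<Gamma> x) \<partial>PiM V (\<lambda>_. M))"
    by (simp only: hom_integrand_isolated[OF fin l avoid] \<Gamma> mult.commute[of _ "\<phi> l _"]
        mult.assoc integral_mult_left_zero)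
  finally show ?thesis by simp
qed

text \<open>A leaf attached to p by e contributes the factor B, after its integrated kernel h / B is
  absorbed into the weight of p.\<close>
lemma integral_peel_leaf_edge:
  assumes M: "prob_space M" and fin: "finite V" and l: "l \<notin> V" and finF: "finite F"
    and e: "e \<notin> F" "e = (p, l) \<or> e = (l, p)" and p: "p \<noteq> l" "p \<in> V"
    and avoid: "\<forall>e'\<in>F. fst e' \<noteq> l \<and> snd e' \<noteq> l" and \<Gamma>: "\<And>x y. \<Gamma> (x(l := y)) = \<Gamma> x"
    and int: "integrable (PiM (insert l V) (\<lambda>_. M))
      (\<lambda>x. hom_integrand (insert l V) (insert e F) \<phi> U x * \<Gamma> x)"
    and h: "h = (\<lambda>z. \<integral>y. \<phi> l y * toward_leaf e l (U e) z y \<partial>M)"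
    and h_range: "\<And>z. z \<in> space M \<Longrightarrow> 0 \<le> h z \<and> h z \<le> B"
  shows "(\<integral>x. hom_integrand (insert l V) (insert e F) \<phi> U x * \<Gamma> x \<partial>PiM (insert l V) (\<lambda>_. M))
    = B * (\<integral>x. hom_integrand V F (\<phi>(p := (\<lambda>z. \<phi> p z * (h z / B)))) U x * \<Gamma> x \<partial>PiM V (\<lambda>_. M))"
proof -
  interpret P: product_sigma_finite "\<lambda>_::nat. M"
    using M by (simp add: product_sigma_finite_def prob_space_imp_sigma_finite)
  have "(\<integral>x. hom_integrand (insert l V) (insert e F) \<phi> U x * \<Gamma> x \<partial>PiM (insert l V) (\<lambda>_. M))
      = (\<integral>x. (\<integral>y. hom_integrand (insert l V) (insert e F) \<phi> U (x(l := y)) * \<Gamma> (x(l := y)) \<partial>M)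
          \<partial>PiM V (\<lambda>_. M))"
    using P.product_integral_insert[OF fin l int] by simp
  also have "\<dots> = (\<integral>x. B * (hom_integrand V F (\<phi>(p := (\<lambda>z. \<phi> p z * (h z / B)))) U x * \<Gamma> x)
      \<partial>PiM V (\<lambda>_. M))"
  proof (rule Bochner_Integration.integral_cong[OF refl])
    fix x assume x: "x \<in> space (PiM V (\<lambda>_. M))"
    have "x p \<in> space M" using x p(2) by (auto simp: space_PiM)
    then have hB: "h (x p) = B * (h (x p) / B)" using h_range by (cases "B = 0") force+
    have "(\<integral>y. hom_integrand (insert l V) (insert e F) \<phi> U (x(l := y)) * \<Gamma> (x(l := y)) \<partial>M)
        = (\<integral>y. (hom_integrand V F \<phi> U x * \<Gamma> x) * (\<phi> l y * toward_leaf e l (U e) (x p) y) \<partial>M)"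
      unfolding hom_integrand_leaf_edge[OF fin finF l e p(1) avoid] \<Gamma> by (simp only: ac_simps)
    also have "\<dots> = (hom_integrand V F \<phi> U x * \<Gamma> x) * h (x p)"
      unfolding h by (rule integral_mult_right_zero)
    also have "\<dots> = B * (hom_integrand V F (\<phi>(p := (\<lambda>z. \<phi> p z * (h z / B)))) U x * \<Gamma> x)"
      unfolding hom_integrand_reweight[OF fin p(2), of F \<phi> "\<lambda>z. h z / B" U x]
      by (subst hB) (simp only: ac_simps)
    finally show "(\<integral>y. hom_integrand (insert l V) (insert e F) \<phi> U (x(l := y)) * \<Gamma> (x(l := y)) \<partial>M)
        = B * (hom_integrand V F (\<phi>(p := (\<lambda>z. \<phi> p z * (h z / B)))) U x * \<Gamma> x)" .
  qed
  finally show ?thesis by simp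
qed

lemma weights_reweight:
  assumes \<phi>: "weights M V \<phi>" and h: "h \<in> borel_measurable M" "\<And>z. z \<in> space M \<Longrightarrow> 0 \<le> h z \<and> h z \<le> B"
  shows "weights M V (\<phi>(p := (\<lambda>z. \<phi> p z * (h z / B))))"
  unfolding weights_def
proof (intro ballI)
  fix v assume v: "v \<in> V"
  show "(\<phi>(p := (\<lambda>z. \<phi> p z * (h z / B)))) v \<in> borel_measurable M \<and>
      (\<forall>z\<in>space M. 0 \<le> (\<phi>(p := (\<lambda>z. \<phi> p z * (h z / B)))) v z
        \<and> (\<phi>(p := (\<lambda>z. \<phi> p z * (h z / B)))) v z \<le> 1)"
  proof (cases "v = p")
    case True
    have "0 \<le> \<phi> p z * (h z / B) \<and> \<phi> p z * (h z / B) \<le> 1" if z: "z \<in> space M" for z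
    proof -
      have "0 \<le> h z / B" "h z / B \<le> 1"
        using h(2)[OF z] by (cases "B = 0"; auto simp: divide_le_eq_1)+
      moreover have "0 \<le> \<phi> p z" "\<phi> p z \<le> 1" using \<phi> v True z unfolding weights_def by auto
      ultimately show ?thesis by (metis mult_le_one mult_nonneg_nonneg)
    qed
    moreover have "(\<lambda>z. \<phi> p z * (h z / B)) \<in> borel_measurable M"
      using \<phi> v True h(1) unfolding weights_def by auto
    ultimately show ?thesis using True by simp
  qed (use \<phi> v in \<open>simp add: weights_def\<close>)
qed

lemma weight_integral_range:
  fixes \<psi> :: "'a \<Rightarrow> real"
  assumes M: "prob_space M" and \<psi>: "\<psi> \<in> borel_measurable M" "\<forall>z\<in>space M. 0 \<le> \<psi> z \<and> \<psi> z \<le> 1"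
  shows "0 \<le> (\<integral>y. \<psi> y \<partial>M) \<and> (\<integral>y. \<psi> y \<partial>M) \<le> 1"
proof -
  interpret prob_space M by fact
  have "integrable M \<psi>"
  proof (rule integrable_const_bound)
    show "AE x in M. norm (\<psi> x) \<le> 1" using \<psi>(2) by (intro AE_I2) auto
  qed (rule \<psi>(1))
  then have "(\<integral>y. \<psi> y \<partial>M) \<le> (\<integral>y. 1 \<partial>M)" using \<psi> by (intro integral_mono) auto
  moreover have "0 \<le> (\<integral>y. \<psi> y \<partial>M)" using \<psi> by (intro integral_nonneg_AE AE_I2) auto
  ultimately show ?thesis using prob_space by simp
qed

lemma peel_leaf_abs_le:
  assumes M: "prob_space M" and B: "0 \<le> B" and fin: "finite V" and l: "l \<notin> V"
    and sub: "F \<subseteq> insert l V \<times> insert l V" and finF: "finite F" and irr: "\<forall>i. (i, i) \<notin> F"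
    and pend: "pendant F l" and \<phi>: "weights M (insert l V) \<phi>" and U: "\<forall>e\<in>F. in_WB M B (U e)"
    and \<Gamma>: "\<And>x y. \<Gamma> (x(l := y)) = \<Gamma> x"
    and int: "integrable (PiM (insert l V) (\<lambda>_. M)) (\<lambda>x. hom_integrand (insert l V) F \<phi> U x * \<Gamma> x)"
    and IH: "\<And>\<psi>. weights M V \<psi> \<Longrightarrow>
      \<bar>\<integral>x. hom_integrand V (away F l) \<psi> U x * \<Gamma> x \<partial>PiM V (\<lambda>_. M)\<bar> \<le> B ^ card (away F l) * C"
  shows "\<bar>\<integral>x. hom_integrand (insert l V) F \<phi> U x * \<Gamma> x \<partial>PiM (insert l V) (\<lambda>_. M)\<bar> \<le> B ^ card F * C"
proof -
  have \<phi>V: "weights M V \<phi>" using weights_subset[OF \<phi>] by blast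
  have \<phi>l: "\<phi> l \<in> borel_measurable M" "\<forall>y\<in>space M. 0 \<le> \<phi> l y \<and> \<phi> l y \<le> 1"
    using \<phi> by (auto simp: weights_def)
  from pend irr show ?thesis
  proof (cases rule: pendant_cases)
    case 1
    then have F: "away F l = F" by (auto simp: away_def)
    have "\<bar>\<integral>x. hom_integrand (insert l V) F \<phi> U x * \<Gamma> x \<partial>PiM (insert l V) (\<lambda>_. M)\<bar>
        = \<bar>\<integral>y. \<phi> l y \<partial>M\<bar> * \<bar>\<integral>x. hom_integrand V F \<phi> U x * \<Gamma> x \<partial>PiM V (\<lambda>_. M)\<bar>"
      using integral_peel_isolated[where \<Gamma>=\<Gamma>, OF M fin l 1 \<Gamma> int] by (simp add: abs_mult)
    also have "\<dots> \<le> 1 * (B ^ card F * C)"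
      using weight_integral_range[OF M \<phi>l] IH[OF \<phi>V] F by (intro mult_mono) auto
    finally show ?thesis by simp
  next
    case (2 p e)
    define F' where "F' = F - {e}"
    have F: "F = insert e F'" "e \<notin> F'" "finite F'" "away F l = F'"
      using 2 finF by (auto simp: F'_def away_def)
    have p: "p \<in> V" and avoid: "\<forall>e'\<in>F'. fst e' \<noteq> l \<and> snd e' \<noteq> l"
      using 2 sub by (auto simp: F'_def)
    define h where h: "h = (\<lambda>z. \<integral>y. \<phi> l y * toward_leaf e l (U e) z y \<partial>M)"
    have Ue: "in_WB M B (U e)" using U 2 by blast
    have h_meas: "h \<in> borel_measurable M" and h_range: "\<And>z. z \<in> space M \<Longrightarrow> 0 \<le> h z \<and> h z \<le> B"
      using leaf_average[OF M B Ue \<phi>l] unfolding h by auto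
    have "\<bar>\<integral>x. hom_integrand (insert l V) F \<phi> U x * \<Gamma> x \<partial>PiM (insert l V) (\<lambda>_. M)\<bar>
        = B * \<bar>\<integral>x. hom_integrand V F' (\<phi>(p := (\<lambda>z. \<phi> p z * (h z / B)))) U x * \<Gamma> x \<partial>PiM V (\<lambda>_. M)\<bar>"
      using integral_peel_leaf_edge[where \<Gamma>=\<Gamma> and \<phi>=\<phi> and U=U,
          OF M fin l F(3,2) 2(3,1) p avoid \<Gamma> _ h h_range] int F(1) B
      by (simp add: abs_mult)
    also have "\<dots> \<le> B * (B ^ card F' * C)"
      using IH[OF weights_reweight[OF \<phi>V h_meas h_range]] F(4) B by (intro mult_left_mono) auto
    also have "\<dots> = B ^ card F * C" using F by simp
    finally show ?thesis .
  qed
qed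

lemma distr_PiM_pair:
  assumes M: "sigma_finite_measure M" and ab: "a \<noteq> b"
  shows "distr (PiM {a, b} (\<lambda>_. M)) (M \<Otimes>\<^sub>M M) (\<lambda>x. (x a, x b)) = M \<Otimes>\<^sub>M M"
proof -
  interpret P: product_sigma_finite "\<lambda>_. M" using M by (simp add: product_sigma_finite_def)
  have T: "(\<lambda>x. (x a, x b)) \<in> measurable (PiM {a, b} (\<lambda>_. M)) (M \<Otimes>\<^sub>M M)" by measurable
  have "M \<Otimes>\<^sub>M M = distr (PiM {a, b} (\<lambda>_. M)) (M \<Otimes>\<^sub>M M) (\<lambda>x. (x a, x b))"
  proof (rule pair_measure_eqI[OF M M])
    fix A B assume A: "A \<in> sets M" and B: "B \<in> sets M"
    define C where "C i = (if i = a then A else B)" for i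
    have "(\<lambda>x. (x a, x b)) -` (A \<times> B) \<inter> space (PiM {a, b} (\<lambda>_. M)) = PiE {a, b} C"
      using sets.sets_into_space[OF A] sets.sets_into_space[OF B] ab
      by (auto simp: C_def space_PiM PiE_iff)
    then have "emeasure (distr (PiM {a, b} (\<lambda>_. M)) (M \<Otimes>\<^sub>M M) (\<lambda>x. (x a, x b))) (A \<times> B)
        = emeasure (PiM {a, b} (\<lambda>_. M)) (PiE {a, b} C)"
      using A B T by (simp add: emeasure_distr)
    also have "\<dots> = emeasure M A * emeasure M B"
      using P.emeasure_PiM[of "{a, b}" C] A B ab by (simp add: C_def)
    finally show "emeasure M A * emeasure M B
        = emeasure (distr (PiM {a, b} (\<lambda>_. M)) (M \<Otimes>\<^sub>M M) (\<lambda>x. (x a, x b))) (A \<times> B)" by simp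
  qed simp
  then show ?thesis by simp
qed

lemma integral_PiM_pair:
  fixes f :: "'a \<Rightarrow> 'a \<Rightarrow> real"
  assumes M: "sigma_finite_measure M" and ab: "a \<noteq> b"
    and f: "(\<lambda>z. f (fst z) (snd z)) \<in> borel_measurable (M \<Otimes>\<^sub>M M)"
  shows "(\<integral>x. f (x a) (x b) \<partial>PiM {a, b} (\<lambda>_. M)) = (\<integral>z. f (fst z) (snd z) \<partial>(M \<Otimes>\<^sub>M M))"
proof -
  have T: "(\<lambda>x. (x a, x b)) \<in> measurable (PiM {a, b} (\<lambda>_. M)) (M \<Otimes>\<^sub>M M)" by measurable
  show ?thesis
    using integral_distr[OF T f] unfolding distr_PiM_pair[OF M ab] by simp
qed

lemma cut_integrand_bound:
  fixes D :: "'a \<Rightarrow> 'a \<Rightarrow> real"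
  assumes D: "integrable (M \<Otimes>\<^sub>M M) (\<lambda>(x, y). D x y)"
    and f: "f \<in> borel_measurable M" "\<forall>x\<in>space M. \<bar>f x\<bar> \<le> 1"
    and g: "g \<in> borel_measurable M" "\<forall>y\<in>space M. \<bar>g y\<bar> \<le> 1"
  shows "integrable (M \<Otimes>\<^sub>M M) (\<lambda>z. f (fst z) * g (snd z) * D (fst z) (snd z))"
    and "\<bar>\<integral>z. f (fst z) * g (snd z) * D (fst z) (snd z) \<partial>(M \<Otimes>\<^sub>M M)\<bar>
      \<le> (\<integral>z. \<bar>D (fst z) (snd z)\<bar> \<partial>(M \<Otimes>\<^sub>M M))"
proof -
  have D': "integrable (M \<Otimes>\<^sub>M M) (\<lambda>z. D (fst z) (snd z))"
    using D by (simp add: case_prod_beta')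
  have bound: "\<bar>f (fst z) * g (snd z) * D (fst z) (snd z)\<bar> \<le> \<bar>D (fst z) (snd z)\<bar>"
    if "z \<in> space (M \<Otimes>\<^sub>M M)" for z
  proof -
    have "\<bar>f (fst z)\<bar> \<le> 1" "\<bar>g (snd z)\<bar> \<le> 1" using that f g by (auto simp: space_pair_measure)
    then have "\<bar>f (fst z) * g (snd z)\<bar> \<le> 1" by (simp add: abs_mult mult_le_one)
    then show ?thesis by (simp add: abs_mult mult_left_le_one_le)
  qed
  have meas: "(\<lambda>z. f (fst z) * g (snd z) * D (fst z) (snd z)) \<in> borel_measurable (M \<Otimes>\<^sub>M M)"
    using f(1) g(1) D' by measurable
  show int: "integrable (M \<Otimes>\<^sub>M M) (\<lambda>z. f (fst z) * g (snd z) * D (fst z) (snd z))"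
    using bound by (intro Bochner_Integration.integrable_bound[OF D' meas] AE_I2) auto
  show "\<bar>\<integral>z. f (fst z) * g (snd z) * D (fst z) (snd z) \<partial>(M \<Otimes>\<^sub>M M)\<bar>
      \<le> (\<integral>z. \<bar>D (fst z) (snd z)\<bar> \<partial>(M \<Otimes>\<^sub>M M))"
    using bound int D' by (intro order_trans[OF integral_abs_bound] integral_mono) auto
qed

text \<open>Each test integral is below the cut norm (the supremum is over a bounded set).\<close>
lemma cut_norm_ge:
  fixes D :: "'a \<Rightarrow> 'a \<Rightarrow> real"
  assumes D: "integrable (M \<Otimes>\<^sub>M M) (\<lambda>(x, y). D x y)"
    and f: "f \<in> borel_measurable M" "\<forall>x\<in>space M. \<bar>f x\<bar> \<le> 1"
    and g: "g \<in> borel_measurable M" "\<forall>y\<in>space M. \<bar>g y\<bar> \<le> 1"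
  shows "\<bar>\<integral>z. f (fst z) * g (snd z) * D (fst z) (snd z) \<partial>(M \<Otimes>\<^sub>M M)\<bar> \<le> cut_norm M D"
  unfolding cut_norm_def
proof (rule cSup_upper)
  show "bdd_above {\<bar>\<integral>z. f (fst z) * g (snd z) * D (fst z) (snd z) \<partial>(M \<Otimes>\<^sub>M M)\<bar> | f g.
      f \<in> borel_measurable M \<and> g \<in> borel_measurable M
      \<and> (\<forall>x\<in>space M. \<bar>f x\<bar> \<le> 1) \<and> (\<forall>y\<in>space M. \<bar>g y\<bar> \<le> 1)}"
    using cut_integrand_bound(2)[OF D] by (intro bdd_aboveI[where M="\<integral>z. \<bar>D (fst z) (snd z)\<bar> \<partial>(M \<Otimes>\<^sub>M M)"]) blast
qed (use f g in blast)

text \<open>Base case of the key estimate: with only the vertices a and b left, the integral is a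
  cut-norm test integral with the weights of a and b as test functions.\<close>
lemma edge_deletion_base:
  fixes D :: "'a \<Rightarrow> 'a \<Rightarrow> real"
  assumes M: "prob_space M" and ab: "a \<noteq> b" and \<phi>: "weights M {a, b} \<phi>"
    and D: "integrable (M \<Otimes>\<^sub>M M) (\<lambda>(x, y). D x y)"
  shows "\<bar>\<integral>x. hom_integrand {a, b} {} \<phi> U x * D (x a) (x b) \<partial>PiM {a, b} (\<lambda>_. M)\<bar> \<le> cut_norm M D"
proof -
  have \<phi>a: "\<phi> a \<in> borel_measurable M" "\<forall>x\<in>space M. \<bar>\<phi> a x\<bar> \<le> 1"
    and \<phi>b: "\<phi> b \<in> borel_measurable M" "\<forall>x\<in>space M. \<bar>\<phi> b x\<bar> \<le> 1"
    using \<phi> by (auto simp: weights_def)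
  have "(\<lambda>z. D (fst z) (snd z)) \<in> borel_measurable (M \<Otimes>\<^sub>M M)"
    using borel_measurable_integrable[OF D] by (simp add: case_prod_beta')
  then have meas: "(\<lambda>z. \<phi> a (fst z) * \<phi> b (snd z) * D (fst z) (snd z)) \<in> borel_measurable (M \<Otimes>\<^sub>M M)"
    using \<phi>a(1) \<phi>b(1) by measurable
  have integrand: "(\<lambda>x. hom_integrand {a, b} {} \<phi> U x * D (x a) (x b))
      = (\<lambda>x. \<phi> a (x a) * \<phi> b (x b) * D (x a) (x b))"
    using ab by (simp add: hom_integrand_def)
  show ?thesis
    unfolding integrand integral_PiM_pair[OF prob_space_imp_sigma_finite[OF M] ab meas]
    by (rule cut_norm_ge[OF D \<phi>a \<phi>b])
qed

lemma edge_swap_difference: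
  assumes M: "prob_space M" and B: "0 \<le> B" and fin: "finite V" and sub: "E \<subseteq> V \<times> V"
    and forest: "forest E" and ab: "(a, b) \<in> E" and \<phi>: "weights M V \<phi>"
    and U: "\<forall>e\<in>E - {(a, b)}. in_WB M B (U e)" and P: "in_WB M B P" and P': "in_WB M B P'"
  shows "integrable (PiM V (\<lambda>_. M))
      (\<lambda>x. hom_integrand V (E - {(a, b)}) \<phi> U x * (P (x a) (x b) - P' (x a) (x b)))"
    and "(\<integral>x. hom_integrand V E \<phi> (U((a, b) := P)) x \<partial>PiM V (\<lambda>_. M))
      - (\<integral>x. hom_integrand V E \<phi> (U((a, b) := P')) x \<partial>PiM V (\<lambda>_. M))
      = (\<integral>x. hom_integrand V (E - {(a, b)}) \<phi> U x * (P (x a) (x b) - P' (x a) (x b)) \<partial>PiM V (\<lambda>_. M))"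
proof -
  have finE: "finite E" using fin sub finite_subset by blast
  have UP: "\<forall>e\<in>E. in_WB M B ((U((a, b) := P)) e)" "\<forall>e\<in>E. in_WB M B ((U((a, b) := P')) e)"
    using U P P' by auto
  note int = hom_integrand_integrable(1)[OF M B fin sub forest \<phi> UP(1)]
    hom_integrand_integrable(1)[OF M B fin sub forest \<phi> UP(2)]
  have eq: "(\<lambda>x. hom_integrand V (E - {(a, b)}) \<phi> U x * (P (x a) (x b) - P' (x a) (x b)))
      = (\<lambda>x. hom_integrand V E \<phi> (U((a, b) := P)) x - hom_integrand V E \<phi> (U((a, b) := P')) x)"
    unfolding hom_integrand_update_edge[OF finE ab] by (simp add: algebra_simps)
  show "integrable (PiM V (\<lambda>_. M))
      (\<lambda>x. hom_integrand V (E - {(a, b)}) \<phi> U x * (P (x a) (x b) - P' (x a) (x b)))"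
    unfolding eq by (rule Bochner_Integration.integrable_diff[OF int])
  show "(\<integral>x. hom_integrand V E \<phi> (U((a, b) := P)) x \<partial>PiM V (\<lambda>_. M))
      - (\<integral>x. hom_integrand V E \<phi> (U((a, b) := P')) x \<partial>PiM V (\<lambda>_. M))
      = (\<integral>x. hom_integrand V (E - {(a, b)}) \<phi> U x * (P (x a) (x b) - P' (x a) (x b)) \<partial>PiM V (\<lambda>_. M))"
    unfolding eq by (rule Bochner_Integration.integral_diff[symmetric, OF int])
qed

lemma edge_deletion_bound:
  assumes M: "prob_space M" and B: "0 \<le> B" and P: "in_WB M B P" and P': "in_WB M B P'"
    and fin: "finite V" and sub: "E \<subseteq> V \<times> V" and forest: "forest E" and ab: "(a, b) \<in> E"
    and \<phi>: "weights M V \<phi>" and U: "\<forall>e\<in>E - {(a, b)}. in_WB M B (U e)"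
  shows "\<bar>\<integral>x. hom_integrand V (E - {(a, b)}) \<phi> U x * (P (x a) (x b) - P' (x a) (x b)) \<partial>PiM V (\<lambda>_. M)\<bar>
    \<le> B ^ (card E - 1) * cut_norm M (\<lambda>x y. P x y - P' x y)"
  using fin sub forest ab \<phi> U
proof (induction V arbitrary: E \<phi> rule: finite_psubset_induct)
  case (psubset V E \<phi>)
  note sub = psubset.prems(1) and forest = psubset.prems(2) and ab = psubset.prems(3)
    and \<phi> = psubset.prems(4) and U = psubset.prems(5)
  define \<Gamma> where "\<Gamma> x = P (x a) (x b) - P' (x a) (x b)" for x :: "nat \<Rightarrow> 'a"
  define C where "C = cut_norm M (\<lambda>x y. P x y - P' x y)"
  have finE: "finite E" using psubset.hyps sub finite_subset by blast
  have a_ne_b: "a \<noteq> b" using forest ab by (auto simp: forest_def)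
  have int: "integrable (PiM V (\<lambda>_. M)) (\<lambda>x. hom_integrand V (E - {(a, b)}) \<phi> U x * \<Gamma> x)"
    unfolding \<Gamma>_def by (rule edge_swap_difference(1)[OF M B psubset.hyps(1) sub forest ab \<phi> U P P'])
  show ?case
  proof (cases "V = {a, b}")
    case True
    then have "E = {(a, b)}" using sub forest ab by (auto simp: forest_def)
    moreover have "integrable (M \<Otimes>\<^sub>M M) (\<lambda>(x, y). P x y - P' x y)"
      using P P' unfolding in_WB_def by (simp add: case_prod_beta')
    ultimately show ?thesis
      using edge_deletion_base[OF M a_ne_b _ , of \<phi> "\<lambda>x y. P x y - P' x y" U] \<phi> True by simp
  next
    case False
    obtain l where l: "l \<in> V" "l \<noteq> a" "l \<noteq> b" "leafy E l"
      using leaf_off_edge[OF psubset.hyps(1) sub forest ab False] by blast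
    define V' where "V' = V - {l}"
    have V: "V = insert l V'" "l \<notin> V'" "finite V'" "V' \<subset> V"
      using l psubset.hyps by (auto simp: V'_def)
    have away: "away E l - {(a, b)} = away (E - {(a, b)}) l" "(a, b) \<in> away E l"
      using ab l by (auto simp: away_def)
    have card_away: "card (away E l) - 1 = card (away (E - {(a, b)}) l)"
      using away finite_subset[OF away_subset finE] by (metis card_Diff_singleton)
    have IH: "\<bar>\<integral>x. hom_integrand V' (away (E - {(a, b)}) l) \<psi> U x * \<Gamma> x \<partial>PiM V' (\<lambda>_. M)\<bar>
        \<le> B ^ card (away (E - {(a, b)}) l) * C" if \<psi>: "weights M V' \<psi>" for \<psi>
      using psubset.IH[OF V(4) away_edges[of E l V'] forest_subset[OF forest away_subset] away(2) \<psi>]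
        sub V(1) U away card_away unfolding \<Gamma>_def C_def by (auto simp: away_def)
    have "\<bar>\<integral>x. hom_integrand V (E - {(a, b)}) \<phi> U x * \<Gamma> x \<partial>PiM V (\<lambda>_. M)\<bar>
        \<le> B ^ card (E - {(a, b)}) * C"
      unfolding V(1)
    proof (rule peel_leaf_abs_le[OF M B V(3,2) _ _ _ _ _ _ _ _ IH])
      show "E - {(a, b)} \<subseteq> insert l V' \<times> insert l V'" using sub V(1) by blast
      show "pendant (E - {(a, b)}) l"
        using pendant_subset[OF leafy_pendant[OF forest l(4)]] by blast
      show "\<Gamma> (x(l := y)) = \<Gamma> x" for x y using l by (simp add: \<Gamma>_def)
    qed (use finE forest \<phi> U int V(1) in \<open>auto simp: forest_def\<close>)
    then show ?thesis using finE ab unfolding \<Gamma>_def C_def by simp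
  qed
qed

lemma swap_one_edge:
  assumes M: "prob_space M" and B: "0 \<le> B" and fin: "finite V" and sub: "E \<subseteq> V \<times> V"
    and forest: "forest E" and e: "e \<in> E" and \<phi>: "weights M V \<phi>"
    and U: "\<forall>e\<in>E. in_WB M B (U e)" and P: "in_WB M B P" and P': "in_WB M B P'"
  shows "\<bar>(\<integral>x. hom_integrand V E \<phi> (U(e := P)) x \<partial>PiM V (\<lambda>_. M))
      - (\<integral>x. hom_integrand V E \<phi> (U(e := P')) x \<partial>PiM V (\<lambda>_. M))\<bar>
    \<le> B ^ (card E - 1) * cut_norm M (\<lambda>x y. P x y - P' x y)"
proof -
  obtain a b where ab: "e = (a, b)" by (cases e)
  have U': "\<forall>e\<in>E - {(a, b)}. in_WB M B (U e)" using U by blast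
  show ?thesis
    unfolding ab edge_swap_difference(2)[OF M B fin sub forest e[unfolded ab] \<phi> U' P P']
    by (rule edge_deletion_bound[OF M B P P' fin sub forest e[unfolded ab] \<phi> U'])
qed

text \<open>Changing all edge kernels one at a time (a telescoping sum over hybrid families).\<close>
lemma hom_integrand_lipschitz:
  assumes M: "prob_space M" and B: "0 \<le> B" and fin: "finite V" and sub: "E \<subseteq> V \<times> V"
    and forest: "forest E" and \<phi>: "weights M V \<phi>"
    and W: "\<forall>e\<in>E. in_WB M B (W e)" and W': "\<forall>e\<in>E. in_WB M B (W' e)"
  shows "\<bar>(\<integral>x. hom_integrand V E \<phi> W x \<partial>PiM V (\<lambda>_. M)) - (\<integral>x. hom_integrand V E \<phi> W' x \<partial>PiM V (\<lambda>_. M))\<bar>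
    \<le> B ^ (card E - 1) * (\<Sum>e\<in>E. cut_norm M (\<lambda>x y. W e x y - W' e x y))"
proof -
  define T where "T U = (\<integral>x. hom_integrand V E \<phi> U x \<partial>PiM V (\<lambda>_. M))" for U
  define hybrid where "hybrid S e = (if e \<in> S then W' e else W e)" for S e
  define C where "C e = cut_norm M (\<lambda>x y. W e x y - W' e x y)" for e
  have finE: "finite E" using fin sub finite_subset by blast
  have telescope: "\<bar>T W - T (hybrid S)\<bar> \<le> B ^ (card E - 1) * (\<Sum>e\<in>S. C e)" if "S \<subseteq> E" for S
    using finite_subset[OF that finE] that
  proof (induction S rule: finite_induct)
    case empty
    then show ?case by (simp add: hybrid_def[abs_def])
  next
    case (insert e S)
    have kernels: "\<forall>e'\<in>E. in_WB M B (hybrid S e')" using W W' by (simp add: hybrid_def)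
    have eE: "e \<in> E" using insert.prems by blast
    have "(hybrid S)(e := W e) = hybrid S" "(hybrid S)(e := W' e) = hybrid (insert e S)"
      using insert.hyps(2) by (auto simp: hybrid_def)
    then have step: "\<bar>T (hybrid S) - T (hybrid (insert e S))\<bar> \<le> B ^ (card E - 1) * C e"
      using swap_one_edge[OF M B fin sub forest eE \<phi> kernels W[rule_format, OF eE] W'[rule_format, OF eE]]
      unfolding T_def C_def by simp
    have "\<bar>T W - T (hybrid (insert e S))\<bar> \<le> \<bar>T W - T (hybrid S)\<bar> + \<bar>T (hybrid S) - T (hybrid (insert e S))\<bar>"
      by simp
    also have "\<dots> \<le> B ^ (card E - 1) * (\<Sum>e\<in>S. C e) + B ^ (card E - 1) * C e"
      using insert step by (intro add_mono) auto
    also have "\<dots> = B ^ (card E - 1) * (\<Sum>e\<in>insert e S. C e)"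
      using insert.hyps by (simp add: algebra_simps)
    finally show ?case .
  qed
  have "hom_integrand V E \<phi> (hybrid E) = hom_integrand V E \<phi> W'"
    by (auto simp: hom_integrand_def hybrid_def intro!: ext arg_cong2[where f="(*)"] prod.cong)
  then have "\<bar>T W - T W'\<bar> \<le> B ^ (card E - 1) * (\<Sum>e\<in>E. C e)"
    using telescope[OF subset_refl] by (simp add: T_def)
  then show ?thesis unfolding T_def C_def .
qed

theorem mainTheorem13:
  fixes M :: "'a measure" and r :: nat and E :: "(nat \<times> nat) set" and B :: real
    and W W' :: "nat \<times> nat \<Rightarrow> 'a \<Rightarrow> 'a \<Rightarrow> real"
  assumes "prob_space M"
    and "oriented_tree r E"
    and "0 \<le> B"
    and "\<forall>e\<in>E. in_WB M B (W e)"
    and "\<forall>e\<in>E. in_WB M B (W' e)"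
  shows "t0 M r E W \<le> B ^ card E \<and>
         \<bar>t0 M r E W - t0 M r E W'\<bar>
           \<le> B ^ (card E - 1) * (\<Sum>e\<in>E. cut_norm M (\<lambda>x y. W e x y - W' e x y))"
proof -
  define V where "V = {1..r}"
  have fin: "finite V" and sub: "E \<subseteq> V \<times> V" and forest: "forest E"
    using assms(2) unfolding oriented_tree_def forest_def V_def by auto
  have unit_weights: "weights M V (\<lambda>_ _. 1)" by (simp add: weights_def)
  have t0: "t0 M r E U = (\<integral>x. hom_integrand V E (\<lambda>_ _. 1) U x \<partial>PiM V (\<lambda>_. M))" for U
    unfolding t0_def hom_integrand_def V_def by simp
  show ?thesis
    unfolding t0
    using hom_integrand_integrable(2)[OF assms(1,3) fin sub forest unit_weights assms(4)]
      hom_integrand_lipschitz[OF assms(1,3) fin sub forest unit_weights assms(4,5)]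
    by blast
qed

end
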